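(* Consider Method 3.2 (described in the context) and suppose it does not terminate. Then for every limit point $(\bar x,\bar\sigma)$ of the sequence $\{(x_k,\sigma_k)\}_{k\in K}$ one has $\bar x\in X^*$ and $\bar\sigma=f^*$.
   Context: Setting: $f$ convex on $\mathbb{R}^n$; $D\subset\mathbb{R}^n$ convex closed with nonempty interior; $f$ attains its minimum $f^*$ on $D$; $X^*=\{x\in D:f(x)=f^*\}$, $x^*\in X^*$ fixed; $K=\{0,1,\dots\}$; $\operatorname{epi}(f,\mathbb{R}^n)=\{(x,\gamma):\gamma\ge f(x)\}$; for a set $Q$ (in $\mathbb{R}^n$ or $\mathbb{R}^{n+1}$), $W^1(u,Q)=\{a:\|a\|=1,\ \langle a,v-u\rangle\le0\ \forall v\in Q\}$. Method 3.2: choose $v'\in\operatorname{int}D$, $v''\in\operatorname{int}\operatorname{epi}(f,\mathbb{R}^n)$, a closed convex bounded $M_0\subset\mathbb{R}^n$ with $x^*\in M_0$, a closed convex $G_0\subset\mathbb{R}^{n+1}$ with $\operatorname{epi}(f,\mathbb{R}^n)\subset G_0$, a number $\bar\gamma\le\min\{f(x):x\in M_0\}$, and numbers $\varepsilon_k>0$, $k\in K$, with $\varepsilon_k\to0$; $i=k=0$. Step 1: $u_i=(y_i,\gamma_i)$ solves $\min\{\gamma:(x,\gamma)\in G_i,\ x\in M_k,\ \gamma\ge\bar\gamma\}$. Step 2: let $\bar u_i$ be the intersection point of the segment $[v'',u_i]$ with the boundary of $\operatorname{epi}(f,\mathbb{R}^n)$; if $\bar u_i=u_i$ and $y_i\in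 D$, stop. Step 3: if $\|\bar u_i-u_i\|>\varepsilon_k$, set $G_{i+1}=G_i\cap\{u:\langle b_i,u-\bar u_i\rangle\le0\}$ with $b_i\in W^1(\bar u_i,\operatorname{epi}(f,\mathbb{R}^n))$, $i\leftarrow i+1$, go to Step 1. Step 4: otherwise set $i_k=i$, $x_k=y_{i_k}$, $\sigma_k=\gamma_{i_k}$, and $G_{i+1}=S_i\cap\{u:\langle b_i,u-\bar u_i\rangle\le0\}$ with $b_i$ as in Step 3 and $S_i$ any closed convex set with $\operatorname{epi}(f,\mathbb{R}^n)\subset S_i$. Step 5: if $x_k\in D$ set $M_{k+1}=M_k$; otherwise let $\bar x_k$ be the intersection point of $[v',x_k]$ with the boundary of $D$ and set $M_{k+1}=M_k\cap\{x:\langle a_k,x-\bar x_k\rangle\le0\}$ with $a_k\in W^1(\bar x_k,D)$. Step 6: $i\leftarrow i+1$, $k\leftarrow k+1$; go to Step 1. *)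

theory Defs
  imports "HOL-Analysis.Analysis"
begin

definition W1 :: "'a::real_inner \<Rightarrow> 'a set \<Rightarrow> 'a set" where
  "W1 u Q = {a. norm a = 1 \<and> (\<forall>v\<in>Q. inner a (v - u) \<le> 0)}"

definition epi :: "('a \<Rightarrow> real) \<Rightarrow> ('a \<times> real) set" where
  "epi f = epigraph UNIV f"

end

theory Submission
  imports Defs
begin

text \<open>
  Every cutting plane b_i supports epi f, so all models G_i contain epi f; every cut a_k supports D,
  so all localizers M_k contain x*. Hence the Step 1 values satisfy gamma_i <= f x*.
  Since norm (ubar_{i_k} - u_{i_k}) <= eps_k -> 0 and ubar_i lies in the closed set epi f,
  every limit point (xl, sl) lies in epi f, so f xl <= sl <= f x*, and it remains to show xl in D.
  Because v' is an interior point of D, the cut through the boundary point of [v', x_k] removes x_k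
  with a margin proportional to the distance of x_k from D, and all later iterates lie behind it;
  two consecutive terms of a convergent subsequence cannot be separated like this if the limit
  lies outside D.
\<close>

lemma mem_epi [simp]: "(x, g) \<in> epi f \<longleftrightarrow> f x \<le> g"
  by (simp add: epi_def mem_epigraph)

lemma closed_epi:
  assumes "continuous_on UNIV f"
  shows "closed (epi f)"
proof -
  have "epi f = {p. f (fst p) \<le> snd p}"
    by auto
  moreover have "continuous_on UNIV (\<lambda>p. f (fst p))"
    by (rule continuous_on_compose2[OF assms continuous_on_fst[OF continuous_on_id]]) auto
  ultimately show ?thesis
    using closed_Collect_le[OF _ continuous_on_snd[OF continuous_on_id]] by simp
qed

lemma W1_norm: "a \<in> W1 u Q \<Longrightarrow> norm a = 1"
  by (simp add: W1_def)

lemma W1_inner_le: "a \<in> W1 u Q \<Longrightarrow> v \<in> Q \<Longrightarrow> inner a (v - u) \<le> 0"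
  by (simp add: W1_def)

lemma limit_in_closed_of_approximants:
  fixes X Y :: "nat \<Rightarrow> 'a::real_normed_vector"
  assumes "closed Q" and "X \<longlonglongrightarrow> l" and "\<And>j. Y j \<in> Q"
    and "\<And>j. norm (Y j - X j) \<le> e j" and "e \<longlonglongrightarrow> 0"
  shows "l \<in> Q"
proof -
  have "(\<lambda>j. Y j - X j) \<longlonglongrightarrow> 0"
    by (rule Lim_null_comparison[OF always_eventually assms(5)]) (use assms(4) in blast)
  then have "Y \<longlonglongrightarrow> l"
    by (rule Lim_transform[OF assms(2)])
  then show ?thesis
    using assms(3) by (intro Lim_in_closed_set[OF assms(1) always_eventually]) auto
qed

lemma central_cut_depth:
  fixes v x xbar a :: "'a::real_inner"
  assumes "0 < \<rho>" and "cball v \<rho> \<subseteq> D" and "xbar \<in> closed_segment v x"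
    and "a \<in> W1 xbar D" and "norm (x - v) \<le> R"
  shows "\<rho> * norm (x - xbar) \<le> R * inner a (x - xbar)"
proof -
  obtain t where t: "0 \<le> t" "t \<le> 1" "xbar = (1 - t) *\<^sub>R v + t *\<^sub>R x"
    using assms(3) by (auto simp: closed_segment_def)
  define s where "s = inner a (x - v)"
  have x_xbar: "x - xbar = (1 - t) *\<^sub>R (x - v)"
    using t(3) by (simp add: algebra_simps)
  have "v + \<rho> *\<^sub>R a \<in> D"
    using assms(1) W1_norm[OF assms(4)] by (intro subsetD[OF assms(2)]) (simp add: dist_norm)
  then have "inner a (v + \<rho> *\<^sub>R a - xbar) \<le> 0"
    using assms(4) by (rule W1_inner_le[rotated])
  moreover have "inner a a = 1"
    using W1_norm[OF assms(4)] by (simp add: dot_square_norm)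
  ultimately have "\<rho> \<le> inner a (xbar - v)"
    by (simp add: inner_diff_right inner_add_right)
  also have "xbar - v = t *\<^sub>R (x - v)"
    using t(3) by (simp add: algebra_simps)
  finally have "\<rho> \<le> t * s"
    by (simp add: s_def)
  have "0 < s"
  proof (rule ccontr)
    assume "\<not> 0 < s"
    then have "t * s \<le> 0"
      using t(1) by (simp add: mult_nonneg_nonpos)
    with \<open>\<rho> \<le> t * s\<close> \<open>0 < \<rho>\<close> show False
      by linarith
  qed
  then have "t * s \<le> s"
    using t by (intro mult_left_le_one_le) auto
  with \<open>\<rho> \<le> t * s\<close> have "\<rho> \<le> s"
    by linarith
  then have "\<rho> * norm (x - v) \<le> s * R"
    using assms(1,5) by (intro mult_mono) auto
  have "\<rho> * norm (x - xbar) = (1 - t) * (\<rho> * norm (x - v))"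
    using t(2) by (simp add: x_xbar)
  also have "\<dots> \<le> (1 - t) * (s * R)"
    using \<open>\<rho> * norm (x - v) \<le> s * R\<close> t(2) by (intro mult_left_mono) auto
  also have "\<dots> = R * inner a (x - xbar)"
    by (simp add: x_xbar s_def)
  finally show ?thesis .
qed

lemma limit_in_closed_of_central_cuts:
  fixes x xbar a :: "nat \<Rightarrow> 'a::real_inner"
  assumes "closed D" and "0 < \<rho>" and "cball v \<rho> \<subseteq> D" and "x \<longlonglongrightarrow> l"
    and cut: "\<And>k. x k \<notin> D \<Longrightarrow>
      xbar k \<in> closed_segment v (x k) \<and> xbar k \<in> D \<and> a k \<in> W1 (xbar k) D"
    and next_cut: "\<And>k. x k \<notin> D \<Longrightarrow> inner (a k) (x (Suc k) - xbar k) \<le> 0"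
  shows "l \<in> D"
proof (rule ccontr)
  assume "l \<notin> D"
  define \<delta> where "\<delta> = infdist l D"
  have "D \<noteq> {}"
    using assms(2,3) by (metis centre_in_cball empty_iff less_eq_real_def subsetD)
  then have "0 < \<delta>"
    using \<open>closed D\<close> \<open>l \<notin> D\<close> by (simp add: \<delta>_def infdist_pos_not_in_closed)
  have "Bseq (\<lambda>k. x k - v)"
    using tendsto_diff[OF assms(4) tendsto_const] by (intro convergent_imp_Bseq convergentI)
  then obtain R where "0 < R" and R: "\<And>k. norm (x k - v) \<le> R"
    by (rule BseqE) blast
  define \<epsilon> where "\<epsilon> = \<rho> * \<delta> / (2 * R)"
  have "0 < \<epsilon>"
    using \<open>0 < \<rho>\<close> \<open>0 < \<delta>\<close> \<open>0 < R\<close> by (simp add: \<epsilon>_def)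
  have "eventually (\<lambda>k. \<delta> / 2 < infdist (x k) D) sequentially"
    using \<open>0 < \<delta>\<close> by (intro order_tendstoD(1)[OF tendsto_infdist[OF assms(4)]]) (simp add: \<delta>_def)
  moreover have "(\<lambda>k. x k - x (Suc k)) \<longlonglongrightarrow> 0"
    using tendsto_diff[OF assms(4) LIMSEQ_Suc[OF assms(4)]] by simp
  then have "eventually (\<lambda>k. norm (x k - x (Suc k)) < \<epsilon>) sequentially"
    using \<open>0 < \<epsilon>\<close> by (intro order_tendstoD(2)[OF tendsto_norm_zero]) simp_all
  ultimately have "eventually (\<lambda>k. \<delta> / 2 < infdist (x k) D \<and> norm (x k - x (Suc k)) < \<epsilon>) sequentially"
    by (rule eventually_conj)
  then obtain k where far: "\<delta> / 2 < infdist (x k) D" and close: "norm (x k - x (Suc k)) < \<epsilon>"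
    unfolding eventually_sequentially by blast
  have "x k \<notin> D"
    using far \<open>0 < \<delta>\<close> infdist_zero[of "x k" D] by linarith
  with cut have xbar: "xbar k \<in> closed_segment v (x k)" "xbar k \<in> D" "a k \<in> W1 (xbar k) D"
    by auto
  have "\<rho> * (\<delta> / 2) \<le> \<rho> * norm (x k - xbar k)"
    using far infdist_le[OF xbar(2), of "x k"] \<open>0 < \<rho>\<close> by (simp add: dist_norm)
  also have "\<dots> \<le> R * inner (a k) (x k - xbar k)"
    using assms(2,3) xbar(1,3) R by (rule central_cut_depth)
  also have "\<dots> \<le> R * inner (a k) (x k - x (Suc k))"
    using next_cut[OF \<open>x k \<notin> D\<close>] \<open>0 < R\<close> by (simp add: inner_diff_right)
  also have "\<dots> \<le> R * norm (x k - x (Suc k))"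
    using Cauchy_Schwarz_ineq2[of "a k" "x k - x (Suc k)"] W1_norm[OF xbar(3)] \<open>0 < R\<close> by simp
  also have "\<dots> < R * \<epsilon>"
    using close \<open>0 < R\<close> by simp
  finally show False
    using \<open>0 < R\<close> by (simp add: \<epsilon>_def)
qed

lemma subseq_limit_in_closed_of_localizers:
  fixes x xbar a :: "nat \<Rightarrow> 'a::real_inner"
  assumes "closed D" and "0 < \<rho>" and "cball v \<rho> \<subseteq> D"
    and "strict_mono r" and "(\<lambda>j. x (r j)) \<longlonglongrightarrow> l"
    and "decseq M" and "\<And>k. x k \<in> M k"
    and cut: "\<And>k. x k \<notin> D \<Longrightarrow>
      xbar k \<in> closed_segment v (x k) \<and> xbar k \<in> D \<and> a k \<in> W1 (xbar k) D \<and>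
      M (Suc k) \<subseteq> {y. inner (a k) (y - xbar k) \<le> 0}"
  shows "l \<in> D"
proof (rule limit_in_closed_of_central_cuts[OF assms(1-3,5),
    where xbar = "\<lambda>j. xbar (r j)" and a = "\<lambda>j. a (r j)"])
  fix j
  assume "x (r j) \<notin> D"
  note cut_j = cut[OF this]
  then show "xbar (r j) \<in> closed_segment v (x (r j)) \<and> xbar (r j) \<in> D \<and> a (r j) \<in> W1 (xbar (r j)) D"
    by blast
  have "x (r (Suc j)) \<in> M (r (Suc j))"
    by (rule assms(7))
  also have "\<dots> \<subseteq> M (Suc (r j))"
    using strict_monoD[OF assms(4), of j "Suc j"] by (intro decseqD[OF assms(6)]) simp
  finally show "inner (a (r j)) (x (r (Suc j)) - xbar (r j)) \<le> 0"
    using cut_j by blast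
qed

lemma outer_approximations_contain:
  assumes "Q \<subseteq> G 0"
    and "\<And>i. b i \<in> W1 (ubar i) Q"
    and "\<And>i. G (Suc i) = G i \<inter> {w. inner (b i) (w - ubar i) \<le> 0} \<or>
      Q \<subseteq> S i \<and> G (Suc i) = S i \<inter> {w. inner (b i) (w - ubar i) \<le> 0}"
  shows "Q \<subseteq> G i"
proof (induction i)
  case 0
  show ?case
    using assms(1) .
next
  case (Suc i)
  have "Q \<subseteq> {w. inner (b i) (w - ubar i) \<le> 0}"
    using W1_inner_le[OF assms(2)] by blast
  with Suc assms(3)[of i] show ?case
    by blast
qed

lemma localizers_decseq_contain_feasible:
  assumes "\<And>k. M (Suc k) = M k \<or>
    a k \<in> W1 (xbar k) D \<and> M (Suc k) = M k \<inter> {x. inner (a k) (x - xbar k) \<le> 0}"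
  shows "decseq M" and "D \<inter> M 0 \<subseteq> M k"
proof -
  show "decseq M"
    using assms by (intro decseq_SucI) blast
  show "D \<inter> M 0 \<subseteq> M k"
  proof (induction k)
    case (Suc k)
    then show ?case
      using assms[of k] W1_inner_le[of "a k" "xbar k" D] by blast
  qed simp
qed

theorem theorem3p2p2:
  fixes f :: "'a::euclidean_space \<Rightarrow> real"
    and D M0 :: "'a set"
    and G0 :: "('a \<times> real) set"
    and xstar v' :: 'a
    and v'' :: "'a \<times> real"
    and gbar :: real
    and eps :: "nat \<Rightarrow> real"
    and u ubar b :: "nat \<Rightarrow> 'a \<times> real"
    and G S :: "nat \<Rightarrow> ('a \<times> real) set"
    and M :: "nat \<Rightarrow> 'a set"
    and xbar a :: "nat \<Rightarrow> 'a"
    and kidx ik :: "nat \<Rightarrow> nat"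
  assumes f_convex: "convex_on UNIV f"
    and D_convex: "convex D" and D_closed: "closed D" and D_int: "interior D \<noteq> {}"
    and xstar_D: "xstar \<in> D" and xstar_min: "\<forall>x\<in>D. f xstar \<le> f x"
    and v'_int: "v' \<in> interior D"
    and v''_int: "v'' \<in> interior (epi f)"
    and M0: "closed M0" "convex M0" "bounded M0" "xstar \<in> M0"
    and G0: "closed G0" "convex G0" "epi f \<subseteq> G0"
    and gbar: "\<forall>x\<in>M0. gbar \<le> f x"
    and eps_pos: "\<forall>k. eps k > 0" and eps_lim: "eps \<longlonglongrightarrow> 0"
    \<comment> \<open>initialisation: i = k = 0\<close>
    and G_0: "G 0 = G0" and M_0: "M 0 = M0" and kidx_0: "kidx 0 = 0"
    \<comment> \<open>Step 1: u_i = (y_i, gamma_i) solves min gamma over G_i, x in M_k, gamma >= gbar\<close>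
    and step1: "\<forall>i. u i \<in> G i \<and> fst (u i) \<in> M (kidx i) \<and> snd (u i) \<ge> gbar \<and>
                 (\<forall>x g. (x, g) \<in> G i \<longrightarrow> x \<in> M (kidx i) \<longrightarrow> g \<ge> gbar \<longrightarrow> snd (u i) \<le> g)"
    \<comment> \<open>Step 2: ubar_i is the intersection of [v'', u_i] with the boundary of epi f;
        the method never stops (does not terminate)\<close>
    and step2: "\<forall>i. ubar i \<in> closed_segment v'' (u i) \<and> ubar i \<in> frontier (epi f)"
    and nonterm: "\<forall>i. \<not> (ubar i = u i \<and> fst (u i) \<in> D)"
    \<comment> \<open>cutting planes b_i used in Steps 3 and 4\<close>
    and b_W1: "\<forall>i. b i \<in> W1 (ubar i) (epi f)"
    \<comment> \<open>Step 3\<close>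
    and step3: "\<forall>i. norm (ubar i - u i) > eps (kidx i) \<longrightarrow>
                 G (Suc i) = G i \<inter> {w. inner (b i) (w - ubar i) \<le> 0} \<and> kidx (Suc i) = kidx i"
    \<comment> \<open>Step 4 (together with Step 6)\<close>
    and step4: "\<forall>i. \<not> norm (ubar i - u i) > eps (kidx i) \<longrightarrow>
                 closed (S i) \<and> convex (S i) \<and> epi f \<subseteq> S i \<and>
                 G (Suc i) = S i \<inter> {w. inner (b i) (w - ubar i) \<le> 0} \<and> kidx (Suc i) = Suc (kidx i)"
    \<comment> \<open>i_k: the iteration at which Step 4 is executed for the k-th time,
        so that x_k = fst (u (ik k)), sigma_k = snd (u (ik k))\<close>
    and ik: "\<forall>k. kidx (ik k) = k \<and> \<not> norm (ubar (ik k) - u (ik k)) > eps k"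
    \<comment> \<open>Step 5\<close>
    and step5_in: "\<forall>k. fst (u (ik k)) \<in> D \<longrightarrow> M (Suc k) = M k"
    and step5_out: "\<forall>k. fst (u (ik k)) \<notin> D \<longrightarrow>
                 xbar k \<in> closed_segment v' (fst (u (ik k))) \<and> xbar k \<in> frontier D \<and>
                 a k \<in> W1 (xbar k) D \<and>
                 M (Suc k) = M k \<inter> {x. inner (a k) (x - xbar k) \<le> 0}"
  shows "\<forall>xl sl. (\<exists>r. strict_mono r \<and> (\<lambda>j. u (ik (r j))) \<longlonglongrightarrow> (xl, sl)) \<longrightarrow>
           xl \<in> {x \<in> D. f x = f xstar} \<and> sl = f xstar"
proof (intro allI impI)
  fix xl sl
  assume "\<exists>r. strict_mono r \<and> (\<lambda>j. u (ik (r j))) \<longlonglongrightarrow> (xl, sl)"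
  then obtain r where r: "strict_mono r" and lim: "(\<lambda>j. u (ik (r j))) \<longlonglongrightarrow> (xl, sl)"
    by blast
  have G_step: "G (Suc i) = G i \<inter> {w. inner (b i) (w - ubar i) \<le> 0} \<or>
      epi f \<subseteq> S i \<and> G (Suc i) = S i \<inter> {w. inner (b i) (w - ubar i) \<le> 0}" for i
    using step3[rule_format, of i] step4[rule_format, of i]
    by (cases "eps (kidx i) < norm (ubar i - u i)") simp_all
  have epi_G: "epi f \<subseteq> G i" for i
    by (rule outer_approximations_contain[of "epi f" G b ubar S, OF _ b_W1[rule_format] G_step])
      (simp add: G0(3) G_0)
  have M_step: "M (Suc k) = M k \<or>
      a k \<in> W1 (xbar k) D \<and> M (Suc k) = M k \<inter> {x. inner (a k) (x - xbar k) \<le> 0}" for k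
    using step5_in[rule_format, of k] step5_out[rule_format, of k]
    by (cases "fst (u (ik k)) \<in> D") simp_all
  note M = localizers_decseq_contain_feasible[of M a xbar D, OF M_step]
  have "snd (u i) \<le> f xstar" for i
  proof -
    have "(xstar, f xstar) \<in> G i" and "xstar \<in> M (kidx i)" and "gbar \<le> f xstar"
      using epi_G[of i] M(2)[of "kidx i"] xstar_D M0(4) M_0 gbar by auto
    then show ?thesis
      using step1[rule_format, of i] by blast
  qed
  then have "sl \<le> f xstar"
    using LIMSEQ_le_const2[OF tendsto_snd[OF lim]] by auto
  have "(xl, sl) \<in> epi f"
  proof (rule limit_in_closed_of_approximants[OF _ lim])
    show "closed (epi f)"
      using convex_on_continuous[OF open_UNIV f_convex] by (rule closed_epi)
    then show "ubar (ik (r j)) \<in> epi f" for j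
      using step2 frontier_subset_closed by blast
    show "norm (ubar (ik (r j)) - u (ik (r j))) \<le> eps (r j)" for j
      using ik by (simp add: not_less)
    show "(\<lambda>j. eps (r j)) \<longlonglongrightarrow> 0"
      using LIMSEQ_subseq_LIMSEQ[OF eps_lim r] by (simp add: o_def)
  qed
  obtain \<rho> where "0 < \<rho>" and "cball v' \<rho> \<subseteq> D"
    using v'_int by (meson open_contains_cball open_interior interior_subset subset_trans)
  have "xl \<in> D"
  proof (rule subseq_limit_in_closed_of_localizers[OF D_closed \<open>0 < \<rho>\<close> \<open>cball v' \<rho> \<subseteq> D\<close> r,
      where x = "\<lambda>k. fst (u (ik k))" and M = M and xbar = xbar and a = a])
    show "(\<lambda>j. fst (u (ik (r j)))) \<longlonglongrightarrow> xl"
      using tendsto_fst[OF lim] by simp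
    show "fst (u (ik k)) \<in> M k" for k
      using step1[rule_format, of "ik k"] ik[rule_format, of k] by simp
    show "xbar k \<in> closed_segment v' (fst (u (ik k))) \<and> xbar k \<in> D \<and> a k \<in> W1 (xbar k) D \<and>
        M (Suc k) \<subseteq> {y. inner (a k) (y - xbar k) \<le> 0}" if "fst (u (ik k)) \<notin> D" for k
      using step5_out[rule_format, OF that] frontier_subset_closed[OF D_closed] by blast
  qed (rule M(1))
  moreover have "f xstar \<le> f xl"
    using xstar_min \<open>xl \<in> D\<close> by blast
  ultimately show "xl \<in> {x \<in> D. f x = f xstar} \<and> sl = f xstar"
    using \<open>(xl, sl) \<in> epi f\<close> \<open>sl \<le> f xstar\<close> by simp
qed

end
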